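(* Let $n$ be a positive integer, let $\hat y\in\mathbb{R}^n$ satisfy $\mathrm{rank}(\mathcal{H}_2(\hat y))=2$, and let $y^*$ be an optimal solution of $$\min_{y\in\mathbb{R}^n}\ \tfrac12\|y-\hat y\|^2\quad\text{s.t.}\quad\mathrm{rank}(\mathcal{H}_2(y))\le1.$$ Then $\mathrm{rank}(\mathcal{H}_2(y^* ))=1$.
   Context: For $x\in\mathbb{R}^n$, $\mathcal{H}_2(x)\in\mathbb{R}^{2\times(n-1)}$ is the Hankel matrix with $(i,j)$ entry $x(i+j-1)$, i.e. first row $(x(1),\dots,x(n-1))$ and second row $(x(2),\dots,x(n))$. *)

theory Defs
  imports "Jordan_Normal_Form.DL_Rank"
begin

text \<open>Vectors in R^n are JNF vectors of dimension n, indexed 0..n-1.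
  The 2 x (n-1) Hankel matrix: entry (i,j) (0-based) is x(i+j),
  i.e. first row x(0..n-2), second row x(1..n-1).\<close>
definition hankel2 :: "real vec \<Rightarrow> real mat" where
  "hankel2 x = mat 2 (dim_vec x - 1) (\<lambda>(i, j). x $ (i + j))"

definition rank2 :: "real mat \<Rightarrow> nat" where
  "rank2 A = vec_space.rank 2 A"

definition obj :: "real vec \<Rightarrow> real vec \<Rightarrow> real" where
  "obj yhat y = (1/2) * (\<Sum>i<dim_vec y. (y $ i - yhat $ i)^2)"

end

theory Submission
  imports Defs "HOL-Analysis.Poly_Roots"
begin

text \<open>If the Hankel matrix of the optimum had rank 0, adding any multiple of a geometric
  vector \<open>(r^i)\<close> would keep the rank at most 1, so optimality forces the residual
  \<open>y* - yhat\<close> to be orthogonal to every geometric vector. The polynomial with the residual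
  as coefficients then vanishes identically, so \<open>y* = yhat\<close>, contradicting rank 2.\<close>

lemma hankel2_carrier: "hankel2 x \<in> carrier_mat 2 (dim_vec x - 1)"
  unfolding hankel2_def by simp

lemma hankel2_add:
  assumes "dim_vec a = dim_vec b"
  shows "hankel2 (a + b) = hankel2 a + hankel2 b"
  unfolding hankel2_def using assms by (intro eq_matI) auto

lemma rank2_hankel2_add_le:
  assumes "dim_vec a = dim_vec b"
  shows "rank2 (hankel2 (a + b)) \<le> rank2 (hankel2 a) + rank2 (hankel2 b)"
  unfolding rank2_def hankel2_add[OF assms]
  using vec_space.rank_subadditive hankel2_carrier[of a] hankel2_carrier[of b] assms
  by metis

lemma rank2_hankel2_geometric_le_1:
  fixes c r :: real
  shows "rank2 (hankel2 (vec n (\<lambda>i. c * r ^ i))) \<le> 1"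
  unfolding rank2_def
proof (rule vec_space.rank_le_1_product_entries[where f = "\<lambda>i. c * r ^ i" and g = "\<lambda>j. r ^ j"])
  show "hankel2 (vec n (\<lambda>i. c * r ^ i)) \<in> carrier_mat 2 (n - 1)"
    using hankel2_carrier[of "vec n (\<lambda>i. c * r ^ i)"] by simp
next
  fix i j
  assume "i < dim_row (hankel2 (vec n (\<lambda>i. c * r ^ i)))"
    and "j < dim_col (hankel2 (vec n (\<lambda>i. c * r ^ i)))"
  then show "hankel2 (vec n (\<lambda>i. c * r ^ i)) $$ (i, j) = c * r ^ i * r ^ j"
    unfolding hankel2_def by (auto simp: power_add)
qed

lemma obj_add_vec:
  assumes "dim_vec v = dim_vec y"
  shows "obj yhat (y + v) = (1/2) * (\<Sum>i<dim_vec y. (y $ i - yhat $ i + v $ i)^2)"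
  unfolding obj_def using assms by (simp add: algebra_simps)

lemma sum_mult_eq_0_if_line_minimal:
  fixes d g :: "'a \<Rightarrow> real"
  assumes "finite A"
    and minimal: "\<And>c. (\<Sum>i\<in>A. (d i)^2) \<le> (\<Sum>i\<in>A. (d i + c * g i)^2)"
  shows "(\<Sum>i\<in>A. d i * g i) = 0"
proof -
  define B where "B = (\<Sum>i\<in>A. d i * g i)"
  define G where "G = (\<Sum>i\<in>A. (g i)^2)"
  have expand: "(\<Sum>i\<in>A. (d i + c * g i)^2) = (\<Sum>i\<in>A. (d i)^2) + 2 * c * B + c^2 * G" for c
    unfolding B_def G_def
    by (simp add: power2_sum power_mult_distrib sum.distrib sum_distrib_left algebra_simps)
  show ?thesis
  proof (cases "G = 0")
    case True
    then have "\<forall>i\<in>A. g i = 0"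
      using sum_nonneg_eq_0_iff[OF \<open>finite A\<close>, of "\<lambda>i. (g i)^2"] unfolding G_def by simp
    then show ?thesis by simp
  next
    case False
    then have "G > 0" unfolding G_def by (simp add: order_le_neq_trans sum_nonneg)
    have "0 \<le> 2 * (- B / G) * B + (- B / G)^2 * G"
      using minimal[of "- B / G"] unfolding expand by simp
    also have "\<dots> = - (B^2 / G)"
      using \<open>G > 0\<close> by (simp add: field_simps power2_eq_square)
    finally have "B^2 \<le> 0"
      using \<open>G > 0\<close> by (simp add: divide_le_0_iff)
    then show ?thesis unfolding B_def by simp
  qed
qed

lemma polyfun_lessThan_eq_0:
  fixes d :: "nat \<Rightarrow> real"
  assumes "\<And>r. (\<Sum>i<n. d i * r ^ i) = 0" and "k < n"
  shows "d k = 0"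
proof -
  have "{..<n} = {..n - 1}" using \<open>k < n\<close> by auto
  then have "\<forall>r. (\<Sum>i\<le>n - 1. d i * r ^ i) = 0" using assms(1) by simp
  then show ?thesis using polyfun_eq_0[of d "n - 1"] \<open>k < n\<close> by simp
qed

theorem proposition4p7:
  fixes n :: nat and yhat ystar :: "real vec"
  assumes "n > 0"
    and "yhat \<in> carrier_vec n"
    and "rank2 (hankel2 yhat) = 2"
    and "ystar \<in> carrier_vec n"
    and "rank2 (hankel2 ystar) \<le> 1"
    and "\<forall>y \<in> carrier_vec n. rank2 (hankel2 y) \<le> 1 \<longrightarrow> obj yhat ystar \<le> obj yhat y"
  shows "rank2 (hankel2 ystar) = 1"
proof (rule ccontr)
  assume "rank2 (hankel2 ystar) \<noteq> 1"
  with assms(5) have rank0: "rank2 (hankel2 ystar) = 0" by simp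
  define d where "d i = ystar $ i - yhat $ i" for i
  have dim_ystar: "dim_vec ystar = n" using assms(4) by simp
  have "(\<Sum>i<n. d i * r ^ i) = 0" for r :: real
  proof (rule sum_mult_eq_0_if_line_minimal)
    fix c :: real
    let ?y = "ystar + vec n (\<lambda>i. c * r ^ i)"
    have "rank2 (hankel2 ?y) \<le> 1"
      using rank2_hankel2_add_le[of ystar "vec n (\<lambda>i. c * r ^ i)"]
        rank2_hankel2_geometric_le_1[of n c r] rank0 dim_ystar
      by simp
    then have "obj yhat ystar \<le> obj yhat ?y" using assms(4,6) by simp
    then show "(\<Sum>i<n. (d i)^2) \<le> (\<Sum>i<n. (d i + c * r ^ i)^2)"
      using obj_add_vec[of "vec n (\<lambda>i. c * r ^ i)" ystar yhat] dim_ystar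
      unfolding obj_def d_def by simp
  qed simp
  then have "d i = 0" if "i < n" for i
    using polyfun_lessThan_eq_0 that by blast
  then have "ystar = yhat"
    using assms(2,4) unfolding d_def by (intro eq_vecI) auto
  then show False using assms(3) rank0 by simp
qed

end
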